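(* Let $S$ be a semigroup with a left unit. If $\ell^{1}(S)$ is approximately biprojective and has a right approximate identity, then $S$ is finite.
   Context: A left unit of $S$ is $e\in S$ with $es=s$ for all $s\in S$. $\ell^1(S)$ is the semigroup algebra. A Banach algebra $A$ is approximately biprojective if there is a net $(\rho_\alpha)$ of continuous $A$-bimodule morphisms $A\to A\otimes_pA$ with $\pi_A\circ\rho_\alpha(a)\to a$ for all $a\in A$, where $\pi_A(a\otimes b)=ab$. *)

theory Defs
  imports "HOL-Analysis.Analysis"
begin

definition l1 :: "('x \<Rightarrow> complex) set" where
  "l1 = {f. (\<lambda>x. norm (f x)) summable_on UNIV}"

definition l1norm :: "('x \<Rightarrow> complex) \<Rightarrow> real" where
  "l1norm f = (\<Sum>\<^sub>\<infinity>x. norm (f x))"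

definition conv :: "('s::semigroup_mult \<Rightarrow> complex) \<Rightarrow> ('s \<Rightarrow> complex) \<Rightarrow> 's \<Rightarrow> complex" where
  "conv f g t = (\<Sum>\<^sub>\<infinity>(r, s) \<in> {(r, s). r * s = t}. f r * g s)"

text \<open>The projective tensor product l1(S) (x)_p l1(S) is identified (isometrically) with
  l1(S x S), via delta_r (x) delta_s |-> delta_(r,s).\<close>

definition lmod :: "('s::semigroup_mult \<Rightarrow> complex) \<Rightarrow> ('s \<times> 's \<Rightarrow> complex) \<Rightarrow> 's \<times> 's \<Rightarrow> complex" where
  "lmod a F = (\<lambda>(x, y). \<Sum>\<^sub>\<infinity>(r, u) \<in> {(r, u). r * u = x}. a r * F (u, y))"

definition rmod :: "('s::semigroup_mult \<times> 's \<Rightarrow> complex) \<Rightarrow> ('s \<Rightarrow> complex) \<Rightarrow> 's \<times> 's \<Rightarrow> complex" where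
  "rmod F a = (\<lambda>(x, y). \<Sum>\<^sub>\<infinity>(v, r) \<in> {(v, r). v * r = y}. F (x, v) * a r)"

definition piS :: "('s::semigroup_mult \<times> 's \<Rightarrow> complex) \<Rightarrow> 's \<Rightarrow> complex" where
  "piS F t = (\<Sum>\<^sub>\<infinity>(r, s) \<in> {(r, s). r * s = t}. F (r, s))"

definition bimod_morph :: "(('s::semigroup_mult \<Rightarrow> complex) \<Rightarrow> ('s \<times> 's \<Rightarrow> complex)) \<Rightarrow> bool" where
  "bimod_morph \<rho> \<longleftrightarrow>
     (\<forall>a\<in>l1. \<rho> a \<in> l1) \<and>
     (\<forall>a\<in>l1. \<forall>b\<in>l1. \<rho> (\<lambda>x. a x + b x) = (\<lambda>p. \<rho> a p + \<rho> b p)) \<and>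
     (\<forall>a\<in>l1. \<forall>c::complex. \<rho> (\<lambda>x. c * a x) = (\<lambda>p. c * \<rho> a p)) \<and>
     (\<exists>C. \<forall>a\<in>l1. l1norm (\<rho> a) \<le> C * l1norm a) \<and>
     (\<forall>a\<in>l1. \<forall>b\<in>l1. \<rho> (conv a b) = lmod a (\<rho> b) \<and> \<rho> (conv a b) = rmod (\<rho> a) b)"

text \<open>Nets are represented by (proper) filters, the standard Isabelle idiom.\<close>

definition approx_biprojective :: "'s::semigroup_mult itself \<Rightarrow> bool" where
  "approx_biprojective _ \<longleftrightarrow>
     (\<exists>F :: (('s \<Rightarrow> complex) \<Rightarrow> ('s \<times> 's \<Rightarrow> complex)) filter.
        F \<noteq> bot \<and> eventually bimod_morph F \<and>
        (\<forall>a\<in>l1. ((\<lambda>\<rho>. l1norm (\<lambda>t. piS (\<rho> a) t - a t)) \<longlongrightarrow> 0) F))"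

definition has_right_approx_identity :: "'s::semigroup_mult itself \<Rightarrow> bool" where
  "has_right_approx_identity _ \<longleftrightarrow>
     (\<exists>F :: ('s \<Rightarrow> complex) filter.
        F \<noteq> bot \<and> eventually (\<lambda>e. e \<in> l1) F \<and>
        (\<forall>a\<in>l1. ((\<lambda>e. l1norm (\<lambda>t. conv a e t - a t)) \<longlongrightarrow> 0) F))"

end

theory Submission
  imports Defs
begin

text \<open>A right approximate identity makes the left unit e two-sided: otherwise, for f close
  to delta_e with delta_z * f close to delta_z, the value (delta_z * f)(z), i.e. the mass of f on
  {u. z u = z}, a set missing e, would be close both to 1 and to 0.
  Now let rho be a bimodule morphism and M = rho(delta_e).  As delta_z = delta_z * delta_e =
  delta_e * delta_z, the element rho(delta_z) is both the left translate of M by z in the first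
  coordinate and its right translate by z in the second.  Its mass on the fibre
  {(x, y). x y = z} is therefore the mass of pi(M) on {w. w z = z}, a set containing e, so it
  lies within the distance from pi(M) to delta_e of 1.  If S is infinite, choose z outside F F
  for a finite F carrying almost all of M; then the two descriptions of rho(delta_z) show that
  this mass is almost 0.  Hence pi(rho(delta_e)) stays at distance at least 1 from delta_e.\<close>

section \<open>Pushforward of absolutely summable functions\<close>

definition pushforward :: "('a \<Rightarrow> 'b) \<Rightarrow> ('a \<Rightarrow> 'c::banach) \<Rightarrow> 'b \<Rightarrow> 'c" where
  "pushforward \<phi> f b = infsum f {a. \<phi> a = b}"

lemma
  fixes f :: "'a \<Rightarrow> 'c::banach"
  assumes "f summable_on (\<phi> -` W)"
  shows pushforward_summable_on: "pushforward \<phi> f summable_on W"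
    and infsum_pushforward: "infsum (pushforward \<phi> f) W = infsum f (\<phi> -` W)"
proof -
  have "(f summable_on (\<phi> -` W)) =
      ((\<lambda>(b, a). f a) summable_on (Sigma W (\<lambda>b. {a. \<phi> a = b})))"
    by (rule summable_on_reindex_bij_witness[where i = snd and j = "\<lambda>a. (\<phi> a, a)"]) auto
  then have sigma: "(\<lambda>(b, a). f a) summable_on (Sigma W (\<lambda>b. {a. \<phi> a = b}))"
    using assms by simp
  have "infsum f (\<phi> -` W) = infsum (\<lambda>(b, a). f a) (Sigma W (\<lambda>b. {a. \<phi> a = b}))"
    by (rule infsum_reindex_bij_witness[where i = snd and j = "\<lambda>a. (\<phi> a, a)"]) auto
  also have "\<dots> = infsum (\<lambda>b. infsum f {a. \<phi> a = b}) W"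
    using infsum_Sigma'_banach[of "\<lambda>b a. f a" W "\<lambda>b. {a. \<phi> a = b}"] sigma by simp
  finally show "infsum (pushforward \<phi> f) W = infsum f (\<phi> -` W)"
    unfolding pushforward_def by simp
  show "pushforward \<phi> f summable_on W"
    using summable_on_Sigma_banach[of "\<lambda>b a. f a" W "\<lambda>b. {a. \<phi> a = b}"] sigma
    unfolding pushforward_def by simp
qed

lemma
  fixes f :: "'a \<Rightarrow> 'c::banach"
  assumes f: "(\<lambda>x. norm (f x)) summable_on UNIV"
  shows abs_summable_pushforward: "(\<lambda>b. norm (pushforward \<phi> f b)) summable_on UNIV"
    and infsum_norm_pushforward_le:
      "infsum (\<lambda>b. norm (pushforward \<phi> f b)) W \<le> infsum (\<lambda>a. norm (f a)) (\<phi> -` W)"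
proof -
  let ?n = "\<lambda>a. norm (f a)"
  have n_summable: "?n summable_on (\<phi> -` V)" for V
    using f summable_on_subset_banach by blast
  have norm_le: "norm (pushforward \<phi> f b) \<le> pushforward \<phi> ?n b" for b
    unfolding pushforward_def
    by (rule norm_infsum_bound) (use f summable_on_subset_banach in blast)
  have pn_summable: "pushforward \<phi> ?n summable_on V" for V
    using pushforward_summable_on[OF n_summable] .
  show summable: "(\<lambda>b. norm (pushforward \<phi> f b)) summable_on UNIV"
    by (rule summable_on_comparison_test[OF pn_summable]) (use norm_le in auto)
  have "infsum (\<lambda>b. norm (pushforward \<phi> f b)) W \<le> infsum (pushforward \<phi> ?n) W"
    by (intro infsum_mono pn_summable norm_le)
      (use summable summable_on_subset_banach in blast)
  also have "\<dots> = infsum ?n (\<phi> -` W)"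
    using infsum_pushforward[OF n_summable] .
  finally show "infsum (\<lambda>b. norm (pushforward \<phi> f b)) W \<le> infsum ?n (\<phi> -` W)" .
qed

lemma abs_summable_summable_on:
  fixes f :: "'a \<Rightarrow> 'b::banach"
  shows "(\<lambda>x. norm (f x)) summable_on UNIV \<Longrightarrow> f summable_on A"
  using abs_summable_summable summable_on_subset_banach by blast

lemma abs_summable_diff:
  fixes f g :: "'a \<Rightarrow> 'b::real_normed_vector"
  assumes "(\<lambda>x. norm (f x)) summable_on A" "(\<lambda>x. norm (g x)) summable_on A"
  shows "(\<lambda>x. norm (f x - g x)) summable_on A"
proof -
  have "(\<lambda>x. norm (f x) + norm (g x)) summable_on A"
    using assms summable_on_add by blast
  then show ?thesis
    by (rule summable_on_comparison_test) (auto intro: norm_triangle_ineq4)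
qed

lemma infsum_norm_mono_set:
  fixes f :: "'a \<Rightarrow> 'b::real_normed_vector"
  assumes "(\<lambda>x. norm (f x)) summable_on UNIV" "A \<subseteq> B"
  shows "infsum (\<lambda>x. norm (f x)) A \<le> infsum (\<lambda>x. norm (f x)) B"
proof (rule infsum_mono2)
  show "(\<lambda>x. norm (f x)) summable_on A" "(\<lambda>x. norm (f x)) summable_on B"
    using assms(1) summable_on_subset_banach by blast+
qed (use assms in auto)

lemma norm_infsum_le_infsum_norm:
  fixes f :: "'a \<Rightarrow> 'b::banach"
  assumes "(\<lambda>x. norm (f x)) summable_on UNIV" "A \<subseteq> B"
  shows "norm (infsum f A) \<le> infsum (\<lambda>x. norm (f x)) B"
proof -
  have "norm (infsum f A) \<le> infsum (\<lambda>x. norm (f x)) A"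
    by (rule norm_infsum_bound) (use assms(1) summable_on_subset_banach in blast)
  also have "\<dots> \<le> infsum (\<lambda>x. norm (f x)) B"
    using infsum_norm_mono_set[OF assms] .
  finally show ?thesis .
qed

lemma l1_diff: "f \<in> l1 \<Longrightarrow> g \<in> l1 \<Longrightarrow> (\<lambda>t. f t - g t) \<in> l1"
  unfolding l1_def using abs_summable_diff by blast

lemma pushforward_in_l1: "f \<in> l1 \<Longrightarrow> pushforward \<phi> f \<in> l1"
  unfolding l1_def using abs_summable_pushforward by blast

lemma norm_infsum_le_l1norm: "f \<in> l1 \<Longrightarrow> norm (infsum f A) \<le> l1norm f"
  using norm_infsum_le_infsum_norm[of f A UNIV] by (simp add: l1_def l1norm_def)

lemma norm_le_l1norm: "f \<in> l1 \<Longrightarrow> norm (f x) \<le> l1norm f"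
  using norm_infsum_le_l1norm[of f "{x}"] by simp

lemma abs_summable_small_tail:
  fixes f :: "'a \<Rightarrow> 'b::banach"
  assumes f: "(\<lambda>x. norm (f x)) summable_on UNIV" and "\<epsilon> > 0"
  obtains F where "finite F" "infsum (\<lambda>x. norm (f x)) (- F) \<le> \<epsilon>"
proof -
  let ?n = "\<lambda>x. norm (f x)"
  obtain F where F: "finite F" "dist (sum ?n F) (infsum ?n UNIV) \<le> \<epsilon>"
    using infsum_finite_approximation[OF f \<open>\<epsilon> > 0\<close>] by blast
  have "infsum ?n UNIV = infsum ?n (F \<union> - F)" by simp
  also have "\<dots> = sum ?n F + infsum ?n (- F)"
    using F(1) f summable_on_subset_banach by (subst infsum_Un_disjoint) auto
  finally show ?thesis
    using that F by (simp add: dist_real_def)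
qed

section \<open>Point masses and translations in the semigroup algebra\<close>

definition delta :: "'a \<Rightarrow> 'a \<Rightarrow> complex" where
  "delta z = (\<lambda>r. if r = z then 1 else 0)"

lemma infsum_delta: "infsum (delta z) A = (if z \<in> A then 1 else 0)"
proof -
  have "infsum (delta z) A = infsum (delta z) (A \<inter> {z})"
    by (rule infsum_cong_neutral) (auto simp: delta_def)
  also have "\<dots> = (if z \<in> A then 1 else 0)"
    by (cases "z \<in> A") (auto simp: delta_def)
  finally show ?thesis .
qed

lemma delta_in_l1: "delta z \<in> l1"
proof -
  have "(\<lambda>x. norm (delta z x)) summable_on {z}" by simp
  then show ?thesis
    unfolding l1_def mem_Collect_eq
    by (rule summable_on_cong_neutral[THEN iffD1, rotated -1]) (auto simp: delta_def)
qed

lemma norm_infsum_sub_delta_le: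
  assumes "f \<in> l1"
  shows "norm (infsum f W - (if e \<in> W then 1 else 0)) \<le> l1norm (\<lambda>t. f t - delta e t)"
proof -
  have diff: "(\<lambda>t. f t - delta e t) \<in> l1"
    by (intro l1_diff assms delta_in_l1)
  have "infsum (\<lambda>t. (f t - delta e t) + delta e t) W =
      infsum (\<lambda>t. f t - delta e t) W + infsum (delta e) W"
    using diff delta_in_l1 unfolding l1_def mem_Collect_eq
    by (intro infsum_add) (rule abs_summable_summable_on, assumption)+
  then have "infsum f W - (if e \<in> W then 1 else 0) = infsum (\<lambda>t. f t - delta e t) W"
    by (simp add: infsum_delta)
  then show ?thesis
    using norm_infsum_le_l1norm[OF diff, of W] by simp
qed

lemma conv_delta_left: "conv (delta z) f = pushforward (\<lambda>u. z * u) f"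
proof
  fix x
  have "conv (delta z) f x = infsum (\<lambda>(r, s). f s) (Pair z ` {s. z * s = x})"
    unfolding conv_def by (rule infsum_cong_neutral) (auto simp: delta_def)
  also have "\<dots> = infsum f {s. z * s = x}"
    by (subst infsum_reindex) (auto simp: inj_on_def o_def)
  finally show "conv (delta z) f x = pushforward (\<lambda>u. z * u) f x"
    unfolding pushforward_def .
qed

lemma conv_delta_left_unit:
  assumes "\<forall>s. e * s = s"
  shows "conv (delta e) f = f"
proof
  fix x
  have "{u. e * u = x} = {x}" using assms by auto
  then show "conv (delta e) f x = f x" by (simp add: conv_delta_left pushforward_def)
qed

lemma lmod_delta: "lmod (delta z) F = pushforward (\<lambda>(u, y). (z * u, y)) F"
proof
  fix p :: "'a \<times> 'a"
  obtain x y where p: "p = (x, y)" by fastforce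
  have "lmod (delta z) F (x, y) = infsum (\<lambda>(r, u). F (u, y)) (Pair z ` {u. z * u = x})"
    unfolding lmod_def by (simp, rule infsum_cong_neutral) (auto simp: delta_def)
  also have "\<dots> = infsum (\<lambda>u. F (u, y)) {u. z * u = x}"
    by (subst infsum_reindex) (auto simp: inj_on_def o_def)
  also have "\<dots> = infsum F ((\<lambda>u. (u, y)) ` {u. z * u = x})"
    by (subst infsum_reindex) (auto simp: inj_on_def o_def)
  also have "(\<lambda>u. (u, y)) ` {u. z * u = x} = {a. (case a of (u, y) \<Rightarrow> (z * u, y)) = (x, y)}"
    by auto
  finally show "lmod (delta z) F p = pushforward (\<lambda>(u, y). (z * u, y)) F p"
    unfolding pushforward_def p .
qed

lemma rmod_delta: "rmod F (delta z) = pushforward (\<lambda>(x, v). (x, v * z)) F"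
proof
  fix p :: "'a \<times> 'a"
  obtain x y where p: "p = (x, y)" by fastforce
  have "rmod F (delta z) (x, y) = infsum (\<lambda>(v, r). F (x, v)) ((\<lambda>v. (v, z)) ` {v. v * z = y})"
    unfolding rmod_def by (simp, rule infsum_cong_neutral) (auto simp: delta_def)
  also have "\<dots> = infsum (\<lambda>v. F (x, v)) {v. v * z = y}"
    by (subst infsum_reindex) (auto simp: inj_on_def o_def)
  also have "\<dots> = infsum F ((\<lambda>v. (x, v)) ` {v. v * z = y})"
    by (subst infsum_reindex) (auto simp: inj_on_def o_def)
  also have "(\<lambda>v. (x, v)) ` {v. v * z = y} = {a. (case a of (x, v) \<Rightarrow> (x, v * z)) = (x, y)}"
    by auto
  finally show "rmod F (delta z) p = pushforward (\<lambda>(x, v). (x, v * z)) F p"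
    unfolding pushforward_def p .
qed

lemma piS_eq_pushforward: "piS F = pushforward (\<lambda>(r, s). r * s) F"
  unfolding piS_def pushforward_def by (auto intro!: ext infsum_cong_neutral)

lemma left_unit_is_right_unit:
  fixes e :: "'s::semigroup_mult"
  assumes e: "\<forall>s. e * s = s" and "has_right_approx_identity TYPE('s)"
  shows "z * e = z"
proof (rule ccontr)
  assume ze: "z * e \<noteq> z"
  from assms(2) obtain F :: "('s \<Rightarrow> complex) filter" where
    F: "F \<noteq> bot" "eventually (\<lambda>f. f \<in> l1) F"
    and lim: "\<forall>a\<in>l1. ((\<lambda>f. l1norm (\<lambda>t. conv a f t - a t)) \<longlongrightarrow> 0) F"
    unfolding has_right_approx_identity_def by blast
  have close: "eventually (\<lambda>f. l1norm (\<lambda>t. conv (delta w) f t - delta w t) < 1/2) F" for w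
    using order_tendstoD(2)[OF bspec[OF lim delta_in_l1], of "1/2"] by simp
  obtain f where f: "f \<in> l1" "l1norm (\<lambda>t. conv (delta e) f t - delta e t) < 1/2"
    "l1norm (\<lambda>t. conv (delta z) f t - delta z t) < 1/2"
    using eventually_happens'[OF F(1) eventually_conj[OF F(2) eventually_conj[OF close close]]]
    by blast
  define U where "U = {u. z * u = z}"
  have "e \<notin> U" using ze by (simp add: U_def)
  then have small: "norm (infsum f U) < 1/2"
    using norm_infsum_sub_delta_le[OF f(1), of U e] f(2) by (simp add: conv_delta_left_unit[OF e])
  have "(\<lambda>t. conv (delta z) f t - delta z t) \<in> l1"
    unfolding conv_delta_left by (intro l1_diff pushforward_in_l1 f(1) delta_in_l1)
  moreover have "conv (delta z) f z - delta z z = infsum f U - 1"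
    unfolding conv_delta_left pushforward_def U_def by (simp add: delta_def)
  ultimately have "norm (infsum f U - 1) < 1/2"
    using norm_le_l1norm[of _ z] f(3) by fastforce
  then have "norm (1::complex) < 1"
    using small norm_triangle_ineq4[of "infsum f U" "infsum f U - 1"] by simp
  then show False by simp
qed

section \<open>Mass of a bimodule morphism on a fibre of the multiplication\<close>

lemma bimod_morph_in_l1: "bimod_morph \<rho> \<Longrightarrow> a \<in> l1 \<Longrightarrow> \<rho> a \<in> l1"
  unfolding bimod_morph_def by blast

lemma bimod_morph_conv:
  assumes "bimod_morph \<rho>" "a \<in> l1" "b \<in> l1"
  shows "\<rho> (conv a b) = lmod a (\<rho> b)" "\<rho> (conv a b) = rmod (\<rho> a) b"
  using assms unfolding bimod_morph_def by blast+

lemma bimod_morph_translates_agree: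
  fixes e :: "'s::semigroup_mult"
  assumes "\<forall>s. e * s = s" "\<forall>s. s * e = s" "bimod_morph \<rho>"
  shows "pushforward (\<lambda>(u, y). (z * u, y)) (\<rho> (delta e)) =
         pushforward (\<lambda>(x, v). (x, v * z)) (\<rho> (delta e))"
proof -
  have "conv (delta z) (delta e) = delta z"
  proof
    fix x
    show "conv (delta z) (delta e) x = delta z x"
      unfolding conv_delta_left pushforward_def infsum_delta
      using assms(2) by (auto simp: delta_def)
  qed
  moreover have "conv (delta e) (delta z) = delta z"
    using conv_delta_left_unit[OF assms(1)] .
  ultimately have "lmod (delta z) (\<rho> (delta e)) = rmod (\<rho> (delta e)) (delta z)"
    using bimod_morph_conv[OF assms(3) delta_in_l1 delta_in_l1] by metis
  then show ?thesis by (simp add: lmod_delta rmod_delta)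
qed

lemma infsum_fibre_right_translate:
  fixes M :: "'s::semigroup_mult \<times> 's \<Rightarrow> 'c::banach"
  assumes "(\<lambda>x. norm (M x)) summable_on UNIV"
  shows "infsum (pushforward (\<lambda>(x, v). (x, v * z)) M) {(x, y). x * y = z} =
         infsum (pushforward (\<lambda>(r, s). r * s) M) {w. w * z = z}"
proof -
  have "(\<lambda>(x, v). (x, v * z)) -` {(x, y). x * y = z} = (\<lambda>(r, s). r * s) -` {w. w * z = z}"
    by (auto simp: mult.assoc)
  then show ?thesis
    by (simp only: infsum_pushforward[OF abs_summable_summable_on[OF assms]])
qed

lemma infsum_fibre_small:
  fixes M :: "'s::semigroup_mult \<times> 's \<Rightarrow> 'c::banach"
  assumes M: "(\<lambda>x. norm (M x)) summable_on UNIV"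
    and tail: "infsum (\<lambda>p. norm (M p)) (- F) \<le> \<epsilon>"
    and z: "z \<notin> (\<lambda>(x, y). x * y) ` (fst ` F \<times> snd ` F)"
    and agree: "pushforward (\<lambda>(u, y). (z * u, y)) M = pushforward (\<lambda>(x, v). (x, v * z)) M"
  shows "norm (infsum (pushforward (\<lambda>(x, v). (x, v * z)) M) {(x, y). x * y = z}) \<le> 2 * \<epsilon>"
proof -
  define N where "N = pushforward (\<lambda>(x, v). (x, v * z)) M"
  have N: "(\<lambda>x. norm (N x)) summable_on UNIV"
    unfolding N_def using abs_summable_pushforward[OF M] .
  have tail_le: "infsum (\<lambda>p. norm (M p)) X \<le> \<epsilon>" if "X \<subseteq> - F" for X
    using infsum_norm_mono_set[OF M that] tail by linarith
  define Fib where "Fib = {(x, y). x * y = z}"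
  define A where "A = {p :: 's \<times> 's. snd p \<notin> snd ` F}"
  define B where "B = {p :: 's \<times> 's. fst p \<notin> fst ` F}"
  \<comment> \<open>Points of the fibre with second coordinate outside F are seen through the left
    translate, the others must have first coordinate outside F and are seen through
    the right translate.\<close>
  have "x * y \<noteq> z" if "x \<in> fst ` F" "y \<in> snd ` F" for x y
    using z that by blast
  then have "Fib - A \<subseteq> B"
    by (auto simp: Fib_def A_def B_def) (metis fst_conv image_eqI snd_conv)
  have A_preimage: "(\<lambda>(u, y). (z * u, y)) -` A \<subseteq> - F"
    by (force simp: A_def)
  have A_small: "infsum (\<lambda>p. norm (N p)) A \<le> \<epsilon>"
    using infsum_norm_pushforward_le[OF M, of "\<lambda>(u, y). (z * u, y)" A] tail_le[OF A_preimage]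
    unfolding N_def agree[symmetric] by linarith
  have B_preimage: "(\<lambda>(x, v). (x, v * z)) -` B \<subseteq> - F"
    by (force simp: B_def)
  have B_small: "infsum (\<lambda>p. norm (N p)) B \<le> \<epsilon>"
    using infsum_norm_pushforward_le[OF M, of "\<lambda>(x, v). (x, v * z)" B] tail_le[OF B_preimage]
    unfolding N_def by linarith
  have "infsum N Fib = infsum N (Fib \<inter> A) + infsum N (Fib - A)"
    using infsum_Un_disjoint[OF abs_summable_summable_on[OF N] abs_summable_summable_on[OF N],
        of "Fib \<inter> A" "Fib - A"]
    by (simp add: Int_Diff_Un Int_Diff_disjoint)
  also have "norm \<dots> \<le> 2 * \<epsilon>"
    using norm_infsum_le_infsum_norm[OF N, of "Fib \<inter> A" A] A_small
      norm_infsum_le_infsum_norm[OF N \<open>Fib - A \<subseteq> B\<close>] B_small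
      norm_triangle_ineq[of "infsum N (Fib \<inter> A)" "infsum N (Fib - A)"] by auto
  finally show ?thesis unfolding N_def Fib_def .
qed

lemma bimod_morph_far_from_diagonal:
  fixes e :: "'s::semigroup_mult"
  assumes "infinite (UNIV :: 's set)" and left: "\<forall>s. e * s = s" and right: "\<forall>s. s * e = s"
    and \<rho>: "bimod_morph \<rho>"
  shows "1 \<le> l1norm (\<lambda>t. piS (\<rho> (delta e)) t - delta e t)" (is "1 \<le> ?d")
proof (rule ccontr)
  assume "\<not> 1 \<le> ?d"
  define M where "M = \<rho> (delta e)"
  have "M \<in> l1"
    unfolding M_def using bimod_morph_in_l1[OF \<rho> delta_in_l1] .
  then have M: "(\<lambda>x. norm (M x)) summable_on UNIV"
    unfolding l1_def by simp
  have "0 < (1 - ?d) / 4"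
    using \<open>\<not> 1 \<le> ?d\<close> by simp
  then obtain F where F: "finite F" "infsum (\<lambda>p. norm (M p)) (- F) \<le> (1 - ?d) / 4"
    using abs_summable_small_tail[OF M] by blast
  have "finite ((\<lambda>(x, y). x * y) ` (fst ` F \<times> snd ` F))"
    using F(1) by simp
  then obtain z where z: "z \<notin> (\<lambda>(x, y). x * y) ` (fst ` F \<times> snd ` F)"
    using ex_new_if_finite[OF assms(1)] by blast
  let ?P = "infsum (pushforward (\<lambda>(x, v). (x, v * z)) M) {(x, y). x * y = z}"
  have "norm ?P \<le> 2 * ((1 - ?d) / 4)"
    using infsum_fibre_small[OF M F(2) z] bimod_morph_translates_agree[OF left right \<rho>]
    unfolding M_def by blast
  moreover have "piS M \<in> l1"
    unfolding piS_eq_pushforward using pushforward_in_l1[OF \<open>M \<in> l1\<close>] .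
  then have "norm (?P - 1) \<le> ?d"
    using norm_infsum_sub_delta_le[of "piS M" "{w. w * z = z}" e] left
    unfolding M_def[symmetric] infsum_fibre_right_translate[OF M] piS_eq_pushforward by simp
  ultimately have "norm (1::complex) < 1"
    using \<open>\<not> 1 \<le> ?d\<close> norm_triangle_ineq4[of ?P "?P - 1"] by simp
  then show False by simp
qed

theorem mainTheorem6:
  assumes "\<exists>e::'s::semigroup_mult. \<forall>s. e * s = s"
    and "approx_biprojective TYPE('s)"
    and "has_right_approx_identity TYPE('s)"
  shows "finite (UNIV :: 's set)"
proof (rule ccontr)
  assume infinite: "infinite (UNIV :: 's set)"
  obtain e :: 's where left: "\<forall>s. e * s = s" using assms(1) by blast
  have right: "\<forall>s. s * e = s" using left_unit_is_right_unit[OF left assms(3)] by blast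
  from assms(2) obtain G :: "(('s \<Rightarrow> complex) \<Rightarrow> ('s \<times> 's \<Rightarrow> complex)) filter" where
    G: "G \<noteq> bot" "eventually bimod_morph G"
    and lim: "\<forall>a\<in>l1. ((\<lambda>\<rho>. l1norm (\<lambda>t. piS (\<rho> a) t - a t)) \<longlongrightarrow> 0) G"
    unfolding approx_biprojective_def by blast
  have "eventually (\<lambda>\<rho>. l1norm (\<lambda>t. piS (\<rho> (delta e)) t - delta e t) < 1) G"
    using order_tendstoD(2)[OF bspec[OF lim delta_in_l1], of 1] by simp
  then obtain \<rho> where \<rho>: "bimod_morph \<rho>" "l1norm (\<lambda>t. piS (\<rho> (delta e)) t - delta e t) < 1"
    using eventually_happens'[OF G(1) eventually_conj[OF G(2)]] by blast
  then show False
    using bimod_morph_far_from_diagonal[OF infinite left right \<rho>(1)] by linarith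
qed

end
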